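(* Let $\Sigma$ be a finite alphabet, let $u,v\in\Sigma^\star$, $i_1,i_2\in[1,|u|]$, $j_1,j_2\in[1,|v|]$ and $n\in\mathbb{N}$. The following are equivalent: (i) (a) $R_n(u)=R_n(v)$; (b) for all $r\in R_n^\star(u)$ and $r'\in R_{n-1}^\star(u)$, $\operatorname{ord}(r(u),r'(u))=\operatorname{ord}(r(v),r'(v))$; (c) $(u,i_1,i_2)\equiv^2_0(v,j_1,j_2)$, i.e. $u_{i_1}=v_{j_1}$, $u_{i_2}=v_{j_2}$ and $\operatorname{ord}(i_1,i_2)=\operatorname{ord}(j_1,j_2)$; (d) for all $r\in R_n^\star(u)$, $\operatorname{ord}(i_1,r(u))=\operatorname{ord}(j_1,r(v))$ and $\operatorname{ord}(i_2,r(u))=\operatorname{ord}(j_2,r(v))$; (ii) $(u,i_1,i_2)\equiv^2_n(v,j_1,j_2)$.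
   Context: Words are finite structures: a word $w=w_1\cdots w_\ell$ has universe $\{1,\dots,\ell\}$, unary predicates $Q_a$ ($a\in\Sigma$) with $Q_a=\{i:w_i=a\}$, and the order $<$. $\mathrm{FO}^2_n[<]$ is first-order logic over this signature (atomic formulas $Q_a(z)$, $z=z'$, $z<z'$) using only the variables $x,y$, with quantifier depth at most $n$. $(w,i,j)$ denotes $w$ with $x$ interpreted as $i$ and $y$ as $j$; $(u,i_1,i_2)\equiv^2_n(v,j_1,j_2)$ means the two structures satisfy the same $\mathrm{FO}^2_n[<]$ formulas with free variables among $x,y$. Boundary positions: for $a\in\Sigma$, $\triangleright_a(w)=\min\{i: w_i=a\}$, $\triangleleft_a(w)=\max\{i: w_i=a\}$, $\triangleright_a(w,q)=\min\{i\in[q+1,|w|]:w_i=a\}$, $\triangleleft_a(w,q)=\max\{i\in[1,q-1]:w_i=a\}$ (undefined if the set is empty). An $n$-ranker ($n\ge1$) is a sequence $r=(p_1,\dots,p_n)$ of boundary positions with $r(w)=p_1(w)$ if $n=1$, undefined if $(p_1,\dots,p_{n-1})(w)$ is undefined, and $p_n(w,(p_1,\dots,p_{n-1})(w))$ otherwise. $R_n(w)$ is the set of $n$-rankers defined over $w$; $R_n^\star(w)=\bigcup_{i\in[1,n]}R_i(w)$ (empty for $n=0$). $\operatorname{ord}(i,j)\in\{<,=,>\}$ is the order type of $i$ and $j$. *)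

theory Defs
  imports Main
begin

definition letter :: "'a list \<Rightarrow> nat \<Rightarrow> 'a" where
  "letter w i = w ! (i - 1)"

datatype var = VX | VY

datatype 'a fo2 =
    Qa 'a var
  | Eqv var var
  | Lessv var var
  | Neg "'a fo2"
  | Conj "'a fo2" "'a fo2"
  | Disj "'a fo2" "'a fo2"
  | Exq var "'a fo2"
  | Allq var "'a fo2"

fun qdepth :: "'a fo2 \<Rightarrow> nat" where
  "qdepth (Qa a z) = 0"
| "qdepth (Eqv z z') = 0"
| "qdepth (Lessv z z') = 0"
| "qdepth (Neg \<phi>) = qdepth \<phi>"
| "qdepth (Conj \<phi> \<psi>) = max (qdepth \<phi>) (qdepth \<psi>)"
| "qdepth (Disj \<phi> \<psi>) = max (qdepth \<phi>) (qdepth \<psi>)"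
| "qdepth (Exq z \<phi>) = Suc (qdepth \<phi>)"
| "qdepth (Allq z \<phi>) = Suc (qdepth \<phi>)"

fun val :: "nat \<Rightarrow> nat \<Rightarrow> var \<Rightarrow> nat" where
  "val i j VX = i"
| "val i j VY = j"

fun sat :: "'a list \<Rightarrow> nat \<Rightarrow> nat \<Rightarrow> 'a fo2 \<Rightarrow> bool" where
  "sat w i j (Qa a z) = (letter w (val i j z) = a)"
| "sat w i j (Eqv z z') = (val i j z = val i j z')"
| "sat w i j (Lessv z z') = (val i j z < val i j z')"
| "sat w i j (Neg \<phi>) = (\<not> sat w i j \<phi>)"
| "sat w i j (Conj \<phi> \<psi>) = (sat w i j \<phi> \<and> sat w i j \<psi>)"
| "sat w i j (Disj \<phi> \<psi>) = (sat w i j \<phi> \<or> sat w i j \<psi>)"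
| "sat w i j (Exq VX \<phi>) = (\<exists>k\<in>{1..length w}. sat w k j \<phi>)"
| "sat w i j (Exq VY \<phi>) = (\<exists>k\<in>{1..length w}. sat w i k \<phi>)"
| "sat w i j (Allq VX \<phi>) = (\<forall>k\<in>{1..length w}. sat w k j \<phi>)"
| "sat w i j (Allq VY \<phi>) = (\<forall>k\<in>{1..length w}. sat w i k \<phi>)"

definition fo2_equiv ::
  "'a list \<Rightarrow> nat \<Rightarrow> nat \<Rightarrow> 'a list \<Rightarrow> nat \<Rightarrow> nat \<Rightarrow> nat \<Rightarrow> bool" where
  "fo2_equiv u i1 i2 v j1 j2 n =
     (\<forall>\<phi> :: 'a fo2. qdepth \<phi> \<le> n \<longrightarrow> (sat u i1 i2 \<phi> \<longleftrightarrow> sat v j1 j2 \<phi>))"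

datatype ordtype = OLess | OEq | OGreater

definition ord :: "nat \<Rightarrow> nat \<Rightarrow> ordtype" where
  "ord i j = (if i < j then OLess else if i = j then OEq else OGreater)"

fun ordo :: "nat option \<Rightarrow> nat option \<Rightarrow> ordtype option" where
  "ordo (Some i) (Some j) = Some (ord i j)"
| "ordo _ _ = None"

datatype 'a bpos = FirstB 'a | LastB 'a

definition bp_abs :: "'a list \<Rightarrow> 'a bpos \<Rightarrow> nat option" where
  "bp_abs w p = (case p of
      FirstB a \<Rightarrow> (let S = {i\<in>{1..length w}. letter w i = a} in
                   if S = {} then None else Some (Min S))
    | LastB a \<Rightarrow> (let S = {i\<in>{1..length w}. letter w i = a} in
                   if S = {} then None else Some (Max S)))"

definition bp_rel :: "'a list \<Rightarrow> 'a bpos \<Rightarrow> nat \<Rightarrow> nat option" where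
  "bp_rel w p q = (case p of
      FirstB a \<Rightarrow> (let S = {i\<in>{q+1..length w}. letter w i = a} in
                   if S = {} then None else Some (Min S))
    | LastB a \<Rightarrow> (let S = {i\<in>{1..q-1}. letter w i = a} in
                   if S = {} then None else Some (Max S)))"

fun rk_cont :: "'a list \<Rightarrow> 'a bpos list \<Rightarrow> nat option \<Rightarrow> nat option" where
  "rk_cont w [] q = q"
| "rk_cont w (p # ps) None = None"
| "rk_cont w (p # ps) (Some q) = rk_cont w ps (bp_rel w p q)"

(* r(w) for a ranker r = (p_1,...,p_n), n \<ge> 1; None = undefined *)
fun rk_eval :: "'a list \<Rightarrow> 'a bpos list \<Rightarrow> nat option" where
  "rk_eval w [] = None"
| "rk_eval w (p # ps) = rk_cont w ps (bp_abs w p)"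

definition R :: "nat \<Rightarrow> 'a list \<Rightarrow> 'a bpos list set" where
  "R n w = {r. length r = n \<and> n \<ge> 1 \<and> rk_eval w r \<noteq> None}"

definition Rstar :: "nat \<Rightarrow> 'a list \<Rightarrow> 'a bpos list set" where
  "Rstar n w = (\<Union>i\<in>{1..n}. R i w)"

end

theory Submission
  imports Defs
begin

text \<open>Both directions pass through \<open>rk_equiv\<close>, condition (i) with rankers quantified by their
  length only. From (ii): the order type of a variable against \<open>r(w)\<close> is expressed by a
  formula of depth \<open>|r|\<close> built from the last boundary position of \<open>r\<close> inwards, alternating the two
  variables; and the order type of \<open>(r p)(w)\<close> against \<open>r'(w)\<close> is decided by whether some position
  carrying the letter of \<open>p\<close> on the side of \<open>r(w)\<close> selected by \<open>p\<close> lies before or after \<open>r'(w)\<close>, which has depth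
  \<open>1 + max |r| |r'| \<le> n\<close>. Towards (ii) one plays the Ehrenfeucht-Fraisse game: a position \<open>k\<close> chosen
  in \<open>u\<close> that no ranker of length \<open>\<le> m\<close> reaches can be replaced by the position of a ranker of
  length \<open>\<le> m + 1\<close> on the same side of the other pebble, indistinguishable from \<open>k\<close> by rankers of
  length \<open>\<le> m\<close>; the answer in \<open>v\<close> is the position of the same ranker there. Condition (a) yields
  agreement of definedness also for shorter rankers, because in a word with two or more positions
  every defined ranker extends to a defined ranker of length \<open>n\<close>.\<close>

fun bpos_letter :: "'a bpos \<Rightarrow> 'a" where
  "bpos_letter (FirstB a) = a"
| "bpos_letter (LastB a) = a"

definition Min_opt :: "'b::linorder set \<Rightarrow> 'b option" where
  "Min_opt E = (if E = {} then None else Some (Min E))"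

definition Max_opt :: "'b::linorder set \<Rightarrow> 'b option" where
  "Max_opt E = (if E = {} then None else Some (Max E))"

lemma Min_opt_empty [simp]: "Min_opt {} = None"
  by (simp add: Min_opt_def)

lemma Max_opt_empty [simp]: "Max_opt {} = None"
  by (simp add: Max_opt_def)

lemma Min_opt_eq_None_iff [simp]: "Min_opt E = None \<longleftrightarrow> E = {}"
  by (simp add: Min_opt_def)

lemma Max_opt_eq_None_iff [simp]: "Max_opt E = None \<longleftrightarrow> E = {}"
  by (simp add: Max_opt_def)

lemma Min_opt_eq_Some_iff:
  "finite E \<Longrightarrow> Min_opt E = Some p \<longleftrightarrow> p \<in> E \<and> (\<forall>y\<in>E. p \<le> y)"
  by (auto simp: Min_opt_def Min_eq_iff)

lemma Max_opt_eq_Some_iff: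
  "finite E \<Longrightarrow> Max_opt E = Some p \<longleftrightarrow> p \<in> E \<and> (\<forall>y\<in>E. y \<le> p)"
  by (auto simp: Max_opt_def Max_eq_iff)

lemma Min_opt_compare:
  assumes "finite E"
  shows "(\<exists>y\<in>E. y < x) \<longleftrightarrow> (\<exists>p. Min_opt E = Some p \<and> p < x)"
    and "(\<exists>y\<in>E. y \<le> x) \<longleftrightarrow> (\<exists>p. Min_opt E = Some p \<and> p \<le> x)"
    and "E \<noteq> {} \<and> \<not> (\<exists>y\<in>E. y \<le> x) \<longleftrightarrow> (\<exists>p. Min_opt E = Some p \<and> x < p)"
    and "E \<noteq> {} \<and> \<not> (\<exists>y\<in>E. y < x) \<longleftrightarrow> (\<exists>p. Min_opt E = Some p \<and> x \<le> p)"
  using assms by (auto simp: Min_opt_def Min_less_iff Min_le_iff not_le not_less)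

lemma Max_opt_compare:
  assumes "finite E"
  shows "(\<exists>y\<in>E. x < y) \<longleftrightarrow> (\<exists>p. Max_opt E = Some p \<and> x < p)"
    and "(\<exists>y\<in>E. x \<le> y) \<longleftrightarrow> (\<exists>p. Max_opt E = Some p \<and> x \<le> p)"
    and "E \<noteq> {} \<and> \<not> (\<exists>y\<in>E. x \<le> y) \<longleftrightarrow> (\<exists>p. Max_opt E = Some p \<and> p < x)"
    and "E \<noteq> {} \<and> \<not> (\<exists>y\<in>E. x < y) \<longleftrightarrow> (\<exists>p. Max_opt E = Some p \<and> p \<le> x)"
  using assms by (auto simp: Max_opt_def Max_gr_iff Max_ge_iff not_le not_less)

lemma bp_rel_FirstB: "bp_rel w (FirstB a) q = Min_opt {i\<in>{q+1..length w}. letter w i = a}"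
  by (simp add: bp_rel_def Min_opt_def)

lemma bp_rel_LastB: "bp_rel w (LastB a) q = Max_opt {i\<in>{1..q-1}. letter w i = a}"
  by (simp add: bp_rel_def Max_opt_def)

lemma bp_abs_FirstB: "bp_abs w (FirstB a) = bp_rel w (FirstB a) 0"
  by (simp add: bp_abs_def bp_rel_def)

lemma bp_abs_LastB: "bp_abs w (LastB a) = bp_rel w (LastB a) (Suc (length w))"
  by (simp add: bp_abs_def bp_rel_def)

lemma bp_rel_SomeD:
  "bp_rel w p q = Some x \<Longrightarrow> q \<le> Suc (length w) \<Longrightarrow> x \<in> {1..length w} \<and> letter w x = bpos_letter p"
  by (cases p) (auto simp: bp_rel_FirstB bp_rel_LastB Min_opt_eq_Some_iff Max_opt_eq_Some_iff)

lemma rk_cont_None [simp]: "rk_cont w ps None = None"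
  by (cases ps) auto

lemma rk_cont_append: "rk_cont w (ps @ qs) q = rk_cont w qs (rk_cont w ps q)"
proof (induction ps arbitrary: q)
  case (Cons p ps)
  then show ?case by (cases q) simp_all
qed simp

lemma rk_eval_append: "r \<noteq> [] \<Longrightarrow> rk_eval w (r @ s) = rk_cont w s (rk_eval w r)"
  by (cases r) (auto simp: rk_cont_append)

lemma rk_eval_snoc:
  "r \<noteq> [] \<Longrightarrow> rk_eval w (r @ [p]) = Option.bind (rk_eval w r) (bp_rel w p)"
  by (cases "rk_eval w r") (simp_all add: rk_eval_append)

lemma rk_eval_prefix_defined: "rk_eval w (r @ s) \<noteq> None \<Longrightarrow> r \<noteq> [] \<Longrightarrow> rk_eval w r \<noteq> None"
  by (metis rk_eval_append rk_cont_None)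

lemma rk_eval_SomeD:
  "rk_eval w r = Some q \<Longrightarrow> q \<in> {1..length w} \<and> letter w q = bpos_letter (last r)"
proof (induction r arbitrary: q rule: rev_induct)
  case (snoc p r)
  show ?case
  proof (cases "r = []")
    case True
    then show ?thesis using snoc.prems
      by (cases p) (auto simp: bp_abs_FirstB bp_abs_LastB dest!: bp_rel_SomeD)
  next
    case False
    then obtain q0 where "rk_eval w r = Some q0" "bp_rel w p q0 = Some q"
      using snoc.prems by (auto simp: rk_eval_snoc bind_eq_Some_conv)
    then show ?thesis using snoc.IH bp_rel_SomeD by fastforce
  qed
qed simp

definition cands_after :: "'a list \<Rightarrow> 'a \<Rightarrow> 'a bpos list \<Rightarrow> nat set" where
  "cands_after w a r =
     {y\<in>{1..length w}. letter w y = a \<and> (r = [] \<or> (\<exists>q. rk_eval w r = Some q \<and> q < y))}"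

definition cands_before :: "'a list \<Rightarrow> 'a \<Rightarrow> 'a bpos list \<Rightarrow> nat set" where
  "cands_before w a r =
     {y\<in>{1..length w}. letter w y = a \<and> (r = [] \<or> (\<exists>q. rk_eval w r = Some q \<and> y < q))}"

lemma finite_cands_after [simp]: "finite (cands_after w a r)"
  by (simp add: cands_after_def)

lemma finite_cands_before [simp]: "finite (cands_before w a r)"
  by (simp add: cands_before_def)

lemma rk_eval_snoc_FirstB: "rk_eval w (r @ [FirstB a]) = Min_opt (cands_after w a r)"
proof (cases "r = []")
  case False
  show ?thesis
  proof (cases "rk_eval w r")
    case (Some q)
    then have "cands_after w a r = {i\<in>{q+1..length w}. letter w i = a}"
      using False by (auto simp: cands_after_def)
    then show ?thesis using False Some by (simp add: rk_eval_snoc bp_rel_FirstB)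
  qed (use False in \<open>simp_all add: rk_eval_snoc cands_after_def\<close>)
qed (simp add: bp_abs_FirstB bp_rel_FirstB cands_after_def)

lemma rk_eval_snoc_LastB: "rk_eval w (r @ [LastB a]) = Max_opt (cands_before w a r)"
proof (cases "r = []")
  case False
  show ?thesis
  proof (cases "rk_eval w r")
    case (Some q)
    then have "q \<le> length w"
      using rk_eval_SomeD by fastforce
    then have "cands_before w a r = {i\<in>{1..q-1}. letter w i = a}"
      using False Some by (auto simp: cands_before_def)
    then show ?thesis using False Some by (simp add: rk_eval_snoc bp_rel_LastB)
  qed (use False in \<open>simp_all add: rk_eval_snoc cands_before_def\<close>)
qed (simp add: bp_abs_LastB bp_rel_LastB cands_before_def)

section \<open>Formulas locating a variable relative to a ranker\<close>

datatype cmp = CLt | CLe | CGt | CGe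

fun cmp_holds :: "cmp \<Rightarrow> nat \<Rightarrow> nat \<Rightarrow> bool" where
  "cmp_holds CLt x p = (x < p)"
| "cmp_holds CLe x p = (x \<le> p)"
| "cmp_holds CGt x p = (p < x)"
| "cmp_holds CGe x p = (p \<le> x)"

fun other_var :: "var \<Rightarrow> var" where
  "other_var VX = VY"
| "other_var VY = VX"

abbreviation Leqv :: "var \<Rightarrow> var \<Rightarrow> 'a fo2" where
  "Leqv z z' \<equiv> Disj (Lessv z z') (Eqv z z')"

text \<open>The ranker is passed reversed: the formula peels off its last boundary position first,
  quantifying the other variable over the candidate positions, whose relation to the remaining
  ranker is then checked recursively.\<close>

fun rk_fml :: "cmp \<Rightarrow> 'a bpos list \<Rightarrow> var \<Rightarrow> 'a fo2" where
  "rk_fml c [] z = Eqv z z"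
| "rk_fml CGt (FirstB a # rs) z =
     Exq (other_var z) (Conj (Lessv (other_var z) z) (Conj (Qa a (other_var z)) (rk_fml CGt rs (other_var z))))"
| "rk_fml CGe (FirstB a # rs) z =
     Exq (other_var z) (Conj (Leqv (other_var z) z) (Conj (Qa a (other_var z)) (rk_fml CGt rs (other_var z))))"
| "rk_fml CLt (FirstB a # rs) z =
     Conj (Exq (other_var z) (Conj (Qa a (other_var z)) (rk_fml CGt rs (other_var z))))
          (Neg (Exq (other_var z) (Conj (Leqv (other_var z) z) (Conj (Qa a (other_var z)) (rk_fml CGt rs (other_var z))))))"
| "rk_fml CLe (FirstB a # rs) z =
     Conj (Exq (other_var z) (Conj (Qa a (other_var z)) (rk_fml CGt rs (other_var z))))
          (Neg (Exq (other_var z) (Conj (Lessv (other_var z) z) (Conj (Qa a (other_var z)) (rk_fml CGt rs (other_var z))))))"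
| "rk_fml CLt (LastB a # rs) z =
     Exq (other_var z) (Conj (Lessv z (other_var z)) (Conj (Qa a (other_var z)) (rk_fml CLt rs (other_var z))))"
| "rk_fml CLe (LastB a # rs) z =
     Exq (other_var z) (Conj (Leqv z (other_var z)) (Conj (Qa a (other_var z)) (rk_fml CLt rs (other_var z))))"
| "rk_fml CGt (LastB a # rs) z =
     Conj (Exq (other_var z) (Conj (Qa a (other_var z)) (rk_fml CLt rs (other_var z))))
          (Neg (Exq (other_var z) (Conj (Leqv z (other_var z)) (Conj (Qa a (other_var z)) (rk_fml CLt rs (other_var z))))))"
| "rk_fml CGe (LastB a # rs) z =
     Conj (Exq (other_var z) (Conj (Qa a (other_var z)) (rk_fml CLt rs (other_var z))))
          (Neg (Exq (other_var z) (Conj (Lessv z (other_var z)) (Conj (Qa a (other_var z)) (rk_fml CLt rs (other_var z))))))"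

lemma qdepth_rk_fml: "qdepth (rk_fml c rs z) \<le> length rs"
  by (induction c rs z rule: rk_fml.induct) auto

lemma sat_rk_fml:
  "sat w i j (rk_fml c (rev r) z) \<longleftrightarrow> r = [] \<or> (\<exists>p. rk_eval w r = Some p \<and> cmp_holds c (val i j z) p)"
proof (induction r arbitrary: c z i j rule: rev_induct)
  case Nil
  then show ?case by (cases z) auto
next
  case (snoc p r)
  note IH = snoc.IH
  show ?case
  proof (cases p)
    case (FirstB a)
    let ?E = "cands_after w a r"
    note M = Min_opt_compare[OF finite_cands_after, of w a r, folded rk_eval_snoc_FirstB]
    have e1: "sat w i j (Exq (other_var z) (Conj (Lessv (other_var z) z) (Conj (Qa a (other_var z)) (rk_fml CGt (rev r) (other_var z)))))
        \<longleftrightarrow> (\<exists>y\<in>?E. y < val i j z)" for i j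
      by (cases z; simp add: IH cands_after_def Bex_def le_less; fastforce)
    have e2: "sat w i j (Exq (other_var z) (Conj (Leqv (other_var z) z) (Conj (Qa a (other_var z)) (rk_fml CGt (rev r) (other_var z)))))
        \<longleftrightarrow> (\<exists>y\<in>?E. y \<le> val i j z)" for i j
      by (cases z; simp add: IH cands_after_def Bex_def le_less; fastforce)
    have e3: "sat w i j (Exq (other_var z) (Conj (Qa a (other_var z)) (rk_fml CGt (rev r) (other_var z)))) \<longleftrightarrow> ?E \<noteq> {}" for i j
      by (cases z; simp add: IH cands_after_def Bex_def le_less; fastforce)
    show ?thesis using FirstB
      by (cases c) (simp_all add: e1 e2 e3 M[symmetric])
  next
    case (LastB a)
    let ?E = "cands_before w a r"
    note M = Max_opt_compare[OF finite_cands_before, of w a r, folded rk_eval_snoc_LastB]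
    have e1: "sat w i j (Exq (other_var z) (Conj (Lessv z (other_var z)) (Conj (Qa a (other_var z)) (rk_fml CLt (rev r) (other_var z)))))
        \<longleftrightarrow> (\<exists>y\<in>?E. val i j z < y)" for i j
      by (cases z; simp add: IH cands_before_def Bex_def le_less; fastforce)
    have e2: "sat w i j (Exq (other_var z) (Conj (Leqv z (other_var z)) (Conj (Qa a (other_var z)) (rk_fml CLt (rev r) (other_var z)))))
        \<longleftrightarrow> (\<exists>y\<in>?E. val i j z \<le> y)" for i j
      by (cases z; simp add: IH cands_before_def Bex_def le_less; fastforce)
    have e3: "sat w i j (Exq (other_var z) (Conj (Qa a (other_var z)) (rk_fml CLt (rev r) (other_var z)))) \<longleftrightarrow> ?E \<noteq> {}" for i j
      by (cases z; simp add: IH cands_before_def Bex_def le_less; fastforce)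
    show ?thesis using LastB
      by (cases c) (simp_all add: e1 e2 e3 M[symmetric])
  qed
qed

lemma ord_eq_ord_iff:
  "ord a b = ord c d \<longleftrightarrow> (a < b \<longleftrightarrow> c < d) \<and> (a = b \<longleftrightarrow> c = d)"
  by (auto simp: ord_def)

lemma ord_eq_ord_swap: "ord a b = ord c d \<Longrightarrow> ord b a = ord d c"
  by (auto simp: ord_def split: if_splits)

lemma fo2_equiv_mono: "fo2_equiv u i1 i2 v j1 j2 n \<Longrightarrow> m \<le> n \<Longrightarrow> fo2_equiv u i1 i2 v j1 j2 m"
  by (simp add: fo2_equiv_def)

lemma fo2_equiv_0_iff:
  "fo2_equiv u i1 i2 v j1 j2 0 \<longleftrightarrow>
     letter u i1 = letter v j1 \<and> letter u i2 = letter v j2 \<and> ord i1 i2 = ord j1 j2"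
  (is "?eq \<longleftrightarrow> ?atomic")
proof
  assume ?eq
  then have "sat u i1 i2 \<phi> = sat v j1 j2 \<phi>" if "qdepth \<phi> = 0" for \<phi> :: "'a fo2"
    using that by (simp add: fo2_equiv_def)
  from this[of "Qa (letter u i1) VX"] this[of "Qa (letter u i2) VY"]
    this[of "Lessv VX VY"] this[of "Eqv VX VY"]
  show ?atomic by (simp add: ord_eq_ord_iff)
next
  assume ?atomic
  have "sat u i1 i2 \<phi> = sat v j1 j2 \<phi>" if "qdepth \<phi> = 0" for \<phi> :: "'a fo2"
    using that
  proof (induction \<phi>)
    case (Qa a z)
    with \<open>?atomic\<close> show ?case by (cases z) auto
  next
    case (Eqv z z')
    with \<open>?atomic\<close> show ?case by (cases z; cases z') (auto simp: ord_eq_ord_iff)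
  next
    case (Lessv z z')
    with \<open>?atomic\<close> show ?case by (cases z; cases z') (auto simp: ord_eq_ord_iff)
  qed auto
  then show ?eq by (simp add: fo2_equiv_def)
qed

section \<open>Ranker comparisons are definable\<close>

lemma ordo_Some_rk_eval:
  "r \<noteq> [] \<Longrightarrow> ordo (Some (val i j z)) (rk_eval w r) =
    (if sat w i j (rk_fml CLt (rev r) z) then Some OLess
     else if sat w i j (rk_fml CGt (rev r) z) then Some OGreater
     else if sat w i j (rk_fml CLe (rev r) z) then Some OEq else None)"
  by (cases "rk_eval w r") (auto simp: sat_rk_fml ord_def)

lemma rk_eval_eq_None_iff_sat:
  "r \<noteq> [] \<Longrightarrow> rk_eval w r = None \<longleftrightarrow> \<not> sat w i j (Disj (rk_fml CLe (rev r) VX) (rk_fml CGt (rev r) VX))"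
  by (cases "rk_eval w r") (auto simp: sat_rk_fml)

lemma ordo_Min_opt:
  "finite E \<Longrightarrow> ordo (Min_opt E) (Some p) =
    (if E = {} then None else if \<exists>y\<in>E. y < p then Some OLess
     else if \<exists>y\<in>E. y \<le> p then Some OEq else Some OGreater)"
  by (auto simp: Min_opt_def ord_def Min_less_iff[symmetric] Min_le_iff[symmetric])

lemma ordo_Max_opt:
  "finite E \<Longrightarrow> ordo (Max_opt E) (Some p) =
    (if E = {} then None else if \<exists>y\<in>E. p < y then Some OGreater
     else if \<exists>y\<in>E. p \<le> y then Some OEq else Some OLess)"
  by (auto simp: Max_opt_def ord_def Max_gr_iff[symmetric] Max_ge_iff[symmetric] simp del: Max_less_iff)

lemma sat_cands_after:
  "rk_eval w r' = Some p' \<Longrightarrow>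
    sat w i j (Exq VX (Conj (Qa a VX) (Conj (rk_fml CGt (rev r) VX) (rk_fml c (rev r') VX)))) \<longleftrightarrow>
    (\<exists>y\<in>cands_after w a r. cmp_holds c y p')"
  by (simp add: cands_after_def sat_rk_fml Bex_def; fastforce)

lemma sat_cands_before:
  "rk_eval w r' = Some p' \<Longrightarrow>
    sat w i j (Exq VX (Conj (Qa a VX) (Conj (rk_fml CLt (rev r) VX) (rk_fml c (rev r') VX)))) \<longleftrightarrow>
    (\<exists>y\<in>cands_before w a r. cmp_holds c y p')"
  by (simp add: cands_before_def sat_rk_fml Bex_def; fastforce)

lemma fo2_equiv_ordo_position:
  assumes eq: "fo2_equiv u i1 i2 v j1 j2 n" and len: "length r \<le> n"
  shows "ordo (Some i1) (rk_eval u r) = ordo (Some j1) (rk_eval v r)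
       \<and> ordo (Some i2) (rk_eval u r) = ordo (Some j2) (rk_eval v r)"
proof (cases "r = []")
  case False
  have "sat u i1 i2 (rk_fml c (rev r) z) = sat v j1 j2 (rk_fml c (rev r) z)" for c z
    using eq len qdepth_rk_fml[of c "rev r" z] by (simp add: fo2_equiv_def)
  then have "ordo (Some (val i1 i2 z)) (rk_eval u r) = ordo (Some (val j1 j2 z)) (rk_eval v r)" for z
    using ordo_Some_rk_eval[OF False, where w=u and i=i1 and j=i2 and z=z]
      ordo_Some_rk_eval[OF False, where w=v and i=j1 and j=j2 and z=z] by simp
  from this[of VX] this[of VY] show ?thesis by simp
qed simp

lemma fo2_equiv_rk_eval_None_iff:
  assumes "fo2_equiv u i1 i2 v j1 j2 n" "length r \<le> n"
  shows "rk_eval u r = None \<longleftrightarrow> rk_eval v r = None"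
proof (cases "r = []")
  case False
  have "sat u i1 i2 (rk_fml c (rev r) VX) = sat v j1 j2 (rk_fml c (rev r) VX)" for c
    using assms qdepth_rk_fml[of c "rev r" VX] by (simp add: fo2_equiv_def)
  then show ?thesis
    using rk_eval_eq_None_iff_sat[OF False, of u i1 i2] rk_eval_eq_None_iff_sat[OF False, of v j1 j2]
    by simp
qed simp

lemma fo2_equiv_cands_after_cmp:
  assumes eq: "fo2_equiv u i1 i2 v j1 j2 n" and len: "length r < n" "length r' < n"
    and p'u: "rk_eval u r' = Some p'u" and p'v: "rk_eval v r' = Some p'v"
  shows "(\<exists>y\<in>cands_after u a r. cmp_holds c y p'u) \<longleftrightarrow> (\<exists>y\<in>cands_after v a r. cmp_holds c y p'v)"
proof -
  let ?\<phi> = "Exq VX (Conj (Qa a VX) (Conj (rk_fml CGt (rev r) VX) (rk_fml c (rev r') VX)))"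
  have "qdepth ?\<phi> \<le> n"
    using len qdepth_rk_fml[of CGt "rev r" VX] qdepth_rk_fml[of c "rev r'" VX] by simp
  with eq have "sat u i1 i2 ?\<phi> = sat v j1 j2 ?\<phi>"
    unfolding fo2_equiv_def by blast
  then show ?thesis
    unfolding sat_cands_after[OF p'u] sat_cands_after[OF p'v] .
qed

lemma fo2_equiv_cands_before_cmp:
  assumes eq: "fo2_equiv u i1 i2 v j1 j2 n" and len: "length r < n" "length r' < n"
    and p'u: "rk_eval u r' = Some p'u" and p'v: "rk_eval v r' = Some p'v"
  shows "(\<exists>y\<in>cands_before u a r. cmp_holds c y p'u) \<longleftrightarrow> (\<exists>y\<in>cands_before v a r. cmp_holds c y p'v)"
proof -
  let ?\<phi> = "Exq VX (Conj (Qa a VX) (Conj (rk_fml CLt (rev r) VX) (rk_fml c (rev r') VX)))"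
  have "qdepth ?\<phi> \<le> n"
    using len qdepth_rk_fml[of CLt "rev r" VX] qdepth_rk_fml[of c "rev r'" VX] by simp
  with eq have "sat u i1 i2 ?\<phi> = sat v j1 j2 ?\<phi>"
    unfolding fo2_equiv_def by blast
  then show ?thesis
    unfolding sat_cands_before[OF p'u] sat_cands_before[OF p'v] .
qed

lemma fo2_equiv_ordo_rankers:
  assumes eq: "fo2_equiv u i1 i2 v j1 j2 n" and len: "length r \<le> n" "length r' < n"
  shows "ordo (rk_eval u r) (rk_eval u r') = ordo (rk_eval v r) (rk_eval v r')"
proof (cases "r = [] \<or> rk_eval u r' = None")
  case True
  then show ?thesis using fo2_equiv_rk_eval_None_iff[OF eq, of r'] len by (cases "rk_eval u r") auto
next
  case False
  then obtain rs p p'u where r: "r = rs @ [p]" and p'u: "rk_eval u r' = Some p'u"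
    by (metis rev_exhaust not_None_eq)
  moreover obtain p'v where p'v: "rk_eval v r' = Some p'v"
    using fo2_equiv_rk_eval_None_iff[OF eq, of r'] len p'u by fastforce
  have len_rs: "length rs < n" using len r by simp
  have undef: "rk_eval u r = None \<longleftrightarrow> rk_eval v r = None"
    using fo2_equiv_rk_eval_None_iff[OF eq len(1)] .
  show ?thesis
  proof (cases p)
    case (FirstB a)
    note cands = fo2_equiv_cands_after_cmp[OF eq len_rs len(2) p'u p'v, of a]
    from undef have "cands_after u a rs = {} \<longleftrightarrow> cands_after v a rs = {}"
      by (simp add: r FirstB rk_eval_snoc_FirstB)
    with cands[of CLt] cands[of CLe] show ?thesis
      by (simp add: r FirstB p'u p'v rk_eval_snoc_FirstB ordo_Min_opt)
  next
    case (LastB a)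
    note cands = fo2_equiv_cands_before_cmp[OF eq len_rs len(2) p'u p'v, of a]
    from undef have "cands_before u a rs = {} \<longleftrightarrow> cands_before v a rs = {}"
      by (simp add: r LastB rk_eval_snoc_LastB)
    with cands[of CGt] cands[of CGe] show ?thesis
      by (simp add: r LastB p'u p'v rk_eval_snoc_LastB ordo_Max_opt)
  qed
qed

section \<open>Ranker equivalence\<close>

text \<open>Undefined rankers are not excluded, so the \<open>ordo\<close> equations also make definedness agree.\<close>

definition rk_equiv :: "'a list \<Rightarrow> nat \<Rightarrow> nat \<Rightarrow> 'a list \<Rightarrow> nat \<Rightarrow> nat \<Rightarrow> nat \<Rightarrow> bool" where
  "rk_equiv u i1 i2 v j1 j2 n \<longleftrightarrow> fo2_equiv u i1 i2 v j1 j2 0 \<and>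
     (\<forall>r. length r \<le> n \<longrightarrow> ordo (Some i1) (rk_eval u r) = ordo (Some j1) (rk_eval v r)
                       \<and> ordo (Some i2) (rk_eval u r) = ordo (Some j2) (rk_eval v r)) \<and>
     (\<forall>r r'. length r \<le> n \<longrightarrow> length r' < n \<longrightarrow>
        ordo (rk_eval u r) (rk_eval u r') = ordo (rk_eval v r) (rk_eval v r'))"

lemma fo2_equiv_imp_rk_equiv: "fo2_equiv u i1 i2 v j1 j2 n \<Longrightarrow> rk_equiv u i1 i2 v j1 j2 n"
  by (simp add: rk_equiv_def fo2_equiv_mono fo2_equiv_ordo_position fo2_equiv_ordo_rankers)

lemma rk_equiv_sym: "rk_equiv u i1 i2 v j1 j2 n \<Longrightarrow> rk_equiv v j1 j2 u i1 i2 n"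
  unfolding rk_equiv_def fo2_equiv_0_iff by metis

lemma rk_equiv_swap: "rk_equiv u i1 i2 v j1 j2 n \<Longrightarrow> rk_equiv u i2 i1 v j2 j1 n"
  unfolding rk_equiv_def fo2_equiv_0_iff using ord_eq_ord_swap by metis

text \<open>The mimicking ranker extends the one reaching the last position below \<open>k\<close> that is reached at
  all by rankers of length \<open>\<le> m\<close>, by a jump to the next occurrence of the letter of \<open>k\<close>.\<close>

lemma ranker_mimics_below:
  assumes k: "k \<in> {1..length w}"
    and unreached: "\<forall>r q. length r \<le> m \<longrightarrow> rk_eval w r = Some q \<longrightarrow> q \<noteq> k"
  obtains r p where "length r \<le> Suc m" "rk_eval w r = Some p" "p \<le> k" "letter w p = letter w k"
    "\<forall>r' q. length r' \<le> m \<longrightarrow> rk_eval w r' = Some q \<longrightarrow> ord p q = ord k q"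
proof -
  define a where "a = letter w k"
  define S where "S = {q. \<exists>r. length r \<le> m \<and> rk_eval w r = Some q \<and> q < k}"
  have "finite S" unfolding S_def by (rule finite_subset[of _ "{..<k}"]) auto
  obtain r0 where r0: "length r0 \<le> m" "k \<in> cands_after w a r0"
    "\<forall>q\<in>S. \<forall>y\<in>cands_after w a r0. q < y"
  proof (cases "S = {}")
    case True
    then show ?thesis using that[of "[]"] k by (simp add: cands_after_def a_def)
  next
    case False
    with \<open>finite S\<close> have "Max S \<in> S" "\<forall>q\<in>S. q \<le> Max S" by simp_all
    then obtain rL where "length rL \<le> m" "rk_eval w rL = Some (Max S)" "Max S < k"
      unfolding S_def by blast
    then show ?thesis using that[of rL] k \<open>\<forall>q\<in>S. q \<le> Max S\<close>
      by (fastforce simp: cands_after_def a_def)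
  qed
  define p where "p = Min (cands_after w a r0)"
  have p: "p \<in> cands_after w a r0" "p \<le> k"
    unfolding p_def using r0(2) by (auto intro: Min_in)
  have "rk_eval w (r0 @ [FirstB a]) = Some p"
    using r0(2) by (auto simp: rk_eval_snoc_FirstB Min_opt_def p_def)
  moreover have "ord p q = ord k q" if "length r' \<le> m" "rk_eval w r' = Some q" for r' q
    using unreached that r0(3) p unfolding S_def ord_def by fastforce
  ultimately show ?thesis using that[of "r0 @ [FirstB a]" p] r0(1) p
    by (auto simp: cands_after_def a_def)
qed

lemma ranker_mimics_above:
  assumes k: "k \<in> {1..length w}"
    and unreached: "\<forall>r q. length r \<le> m \<longrightarrow> rk_eval w r = Some q \<longrightarrow> q \<noteq> k"
  obtains r p where "length r \<le> Suc m" "rk_eval w r = Some p" "k \<le> p" "letter w p = letter w k"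
    "\<forall>r' q. length r' \<le> m \<longrightarrow> rk_eval w r' = Some q \<longrightarrow> ord p q = ord k q"
proof -
  define a where "a = letter w k"
  define S where "S = {q. \<exists>r. length r \<le> m \<and> rk_eval w r = Some q \<and> k < q}"
  have "finite S" unfolding S_def
    by (rule finite_subset[of _ "{..length w}"]) (auto dest: rk_eval_SomeD)
  obtain r0 where r0: "length r0 \<le> m" "k \<in> cands_before w a r0"
    "\<forall>q\<in>S. \<forall>y\<in>cands_before w a r0. y < q"
  proof (cases "S = {}")
    case True
    then show ?thesis using that[of "[]"] k by (simp add: cands_before_def a_def)
  next
    case False
    with \<open>finite S\<close> have "Min S \<in> S" "\<forall>q\<in>S. Min S \<le> q" by simp_all
    then obtain rR where "length rR \<le> m" "rk_eval w rR = Some (Min S)" "k < Min S"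
      unfolding S_def by blast
    then show ?thesis using that[of rR] k \<open>\<forall>q\<in>S. Min S \<le> q\<close>
      by (fastforce simp: cands_before_def a_def)
  qed
  define p where "p = Max (cands_before w a r0)"
  have p: "p \<in> cands_before w a r0" "k \<le> p"
    unfolding p_def using r0(2) by (auto intro: Max_in)
  have "rk_eval w (r0 @ [LastB a]) = Some p"
    using r0(2) by (auto simp: rk_eval_snoc_LastB Max_opt_def p_def)
  moreover have "ord p q = ord k q" if "length r' \<le> m" "rk_eval w r' = Some q" for r' q
    using unreached that r0(3) p unfolding S_def ord_def by fastforce
  ultimately show ?thesis using that[of "r0 @ [LastB a]" p] r0(1) p
    by (auto simp: cands_before_def a_def)
qed

lemma ranker_mimics:
  assumes "k \<in> {1..length w}" "k \<noteq> i"
  obtains r p where "length r \<le> Suc m" "rk_eval w r = Some p" "letter w p = letter w k"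
    "ord p i = ord k i" "\<forall>r' q. length r' \<le> m \<longrightarrow> rk_eval w r' = Some q \<longrightarrow> ord p q = ord k q"
proof (cases "\<exists>r. length r \<le> m \<and> rk_eval w r = Some k")
  case True
  then obtain r where "length r \<le> m" "rk_eval w r = Some k" by blast
  with that[of r k] show ?thesis by simp
next
  case False
  then have unreached: "\<forall>r q. length r \<le> m \<longrightarrow> rk_eval w r = Some q \<longrightarrow> q \<noteq> k"
    by blast
  show ?thesis
  proof (cases "k < i")
    case True
    obtain r p where "length r \<le> Suc m" "rk_eval w r = Some p" "p \<le> k" "letter w p = letter w k"
      "\<forall>r' q. length r' \<le> m \<longrightarrow> rk_eval w r' = Some q \<longrightarrow> ord p q = ord k q"
      using ranker_mimics_below[OF assms(1) unreached] .
    with True show ?thesis using that by (simp add: ord_def)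
  next
    case False
    obtain r p where "length r \<le> Suc m" "rk_eval w r = Some p" "k \<le> p" "letter w p = letter w k"
      "\<forall>r' q. length r' \<le> m \<longrightarrow> rk_eval w r' = Some q \<longrightarrow> ord p q = ord k q"
      using ranker_mimics_above[OF assms(1) unreached] .
    with False assms(2) show ?thesis using that by (simp add: ord_def)
  qed
qed

lemma rk_equiv_replace_first:
  assumes eq: "rk_equiv u i1 i2 v j1 j2 (Suc m)"
    and "letter u k = letter v k'" "ord k i2 = ord k' j2"
    and "\<forall>r. length r \<le> m \<longrightarrow> ordo (Some k) (rk_eval u r) = ordo (Some k') (rk_eval v r)"
  shows "rk_equiv u k i2 v k' j2 m"
proof -
  from eq have "letter u i2 = letter v j2"
    and "\<forall>r. length r \<le> m \<longrightarrow> ordo (Some i2) (rk_eval u r) = ordo (Some j2) (rk_eval v r)"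
    and "\<forall>r r'. length r \<le> m \<longrightarrow> length r' < m \<longrightarrow>
           ordo (rk_eval u r) (rk_eval u r') = ordo (rk_eval v r) (rk_eval v r')"
    by (simp_all add: rk_equiv_def fo2_equiv_0_iff)
  with assms(2-4) show ?thesis by (simp add: rk_equiv_def fo2_equiv_0_iff)
qed

lemma rk_equiv_forth:
  assumes eq: "rk_equiv u i1 i2 v j1 j2 (Suc m)" and j2: "j2 \<in> {1..length v}"
    and k: "k \<in> {1..length u}"
  shows "\<exists>k'\<in>{1..length v}. rk_equiv u k i2 v k' j2 m"
proof (cases "k = i2")
  case True
  from eq have "letter u i2 = letter v j2"
    and "\<forall>r. length r \<le> m \<longrightarrow> ordo (Some i2) (rk_eval u r) = ordo (Some j2) (rk_eval v r)"
    by (simp_all add: rk_equiv_def fo2_equiv_0_iff)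
  with True have "rk_equiv u k i2 v j2 j2 m"
    by (intro rk_equiv_replace_first[OF eq]) (simp_all add: ord_def)
  with j2 show ?thesis by blast
next
  case False
  obtain r p where r: "length r \<le> Suc m" "rk_eval u r = Some p" and p: "letter u p = letter u k"
    "ord p i2 = ord k i2" "\<forall>r' q. length r' \<le> m \<longrightarrow> rk_eval u r' = Some q \<longrightarrow> ord p q = ord k q"
    using ranker_mimics[OF k False] .
  from eq r(1) have pos: "ordo (Some i1) (rk_eval u r) = ordo (Some j1) (rk_eval v r)"
    "ordo (Some i2) (rk_eval u r) = ordo (Some j2) (rk_eval v r)"
    by (simp_all add: rk_equiv_def)
  from eq r(1) have rk: "ordo (rk_eval u r) (rk_eval u r') = ordo (rk_eval v r) (rk_eval v r')"
    if "length r' \<le> m" for r'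
    using that by (simp add: rk_equiv_def)
  obtain p' where p': "rk_eval v r = Some p'"
    using pos(1) r(2) by (cases "rk_eval v r") auto
  have "letter u k = letter v p'"
    using rk_eval_SomeD[OF p'] rk_eval_SomeD[OF r(2)] p(1) by simp
  moreover have "ord k i2 = ord p' j2"
  proof -
    have "ord i2 p = ord j2 p'" using pos(2) r(2) p' by simp
    from ord_eq_ord_swap[OF this] p(2) show ?thesis by simp
  qed
  moreover have "ordo (Some k) (rk_eval u r') = ordo (Some p') (rk_eval v r')" if "length r' \<le> m" for r'
    using rk[OF that] r(2) p' p(3) that by (cases "rk_eval u r'"; cases "rk_eval v r'") auto
  ultimately have "rk_equiv u k i2 v p' j2 m"
    by (intro rk_equiv_replace_first[OF eq]) auto
  then show ?thesis using rk_eval_SomeD[OF p'] by blast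
qed

lemma rk_equiv_back:
  assumes "rk_equiv u i1 i2 v j1 j2 (Suc m)" "i2 \<in> {1..length u}" "k' \<in> {1..length v}"
  shows "\<exists>k\<in>{1..length u}. rk_equiv u k i2 v k' j2 m"
  using rk_equiv_forth[OF rk_equiv_sym[OF assms(1)] assms(2,3)] rk_equiv_sym by blast

lemma bex_ball_transfer:
  assumes "\<forall>x\<in>A. \<exists>y\<in>B. P x = Q y" "\<forall>y\<in>B. \<exists>x\<in>A. P x = Q y"
  shows "(\<exists>x\<in>A. P x) = (\<exists>y\<in>B. Q y)" "(\<forall>x\<in>A. P x) = (\<forall>y\<in>B. Q y)"
  using assms by metis+

lemma sat_quantifier_transfer:
  assumes eq: "rk_equiv u i1 i2 v j1 j2 (Suc m)"
    and ranges: "i1 \<in> {1..length u}" "i2 \<in> {1..length u}" "j1 \<in> {1..length v}" "j2 \<in> {1..length v}"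
    and IH: "\<And>k1 k2 l1 l2. rk_equiv u k1 k2 v l1 l2 m \<Longrightarrow>
      k1 \<in> {1..length u} \<Longrightarrow> k2 \<in> {1..length u} \<Longrightarrow> l1 \<in> {1..length v} \<Longrightarrow> l2 \<in> {1..length v} \<Longrightarrow>
      sat u k1 k2 \<phi> = sat v l1 l2 \<phi>"
  shows "sat u i1 i2 (Exq z \<phi>) = sat v j1 j2 (Exq z \<phi>) \<and> sat u i1 i2 (Allq z \<phi>) = sat v j1 j2 (Allq z \<phi>)"
proof (cases z)
  case VX
  have "\<forall>k\<in>{1..length u}. \<exists>k'\<in>{1..length v}. sat u k i2 \<phi> = sat v k' j2 \<phi>"
    using rk_equiv_forth[OF eq ranges(4)] IH ranges by blast
  moreover have "\<forall>k'\<in>{1..length v}. \<exists>k\<in>{1..length u}. sat u k i2 \<phi> = sat v k' j2 \<phi>"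
    using rk_equiv_back[OF eq ranges(2)] IH ranges by blast
  ultimately show ?thesis
    using VX bex_ball_transfer[of "{1..length u}" "{1..length v}" "\<lambda>k. sat u k i2 \<phi>" "\<lambda>k. sat v k j2 \<phi>"]
    by simp
next
  case VY
  have "\<forall>k\<in>{1..length u}. \<exists>k'\<in>{1..length v}. sat u i1 k \<phi> = sat v j1 k' \<phi>"
    using rk_equiv_forth[OF rk_equiv_swap[OF eq] ranges(3)] rk_equiv_swap IH ranges by blast
  moreover have "\<forall>k'\<in>{1..length v}. \<exists>k\<in>{1..length u}. sat u i1 k \<phi> = sat v j1 k' \<phi>"
    using rk_equiv_back[OF rk_equiv_swap[OF eq] ranges(1)] rk_equiv_swap IH ranges by blast
  ultimately show ?thesis
    using VY bex_ball_transfer[of "{1..length u}" "{1..length v}" "\<lambda>k. sat u i1 k \<phi>" "\<lambda>k. sat v j1 k \<phi>"]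
    by simp
qed

lemma rk_equiv_sat_atomic:
  "rk_equiv u i1 i2 v j1 j2 n \<Longrightarrow> qdepth \<phi> = 0 \<Longrightarrow> sat u i1 i2 \<phi> = sat v j1 j2 \<phi>"
  by (simp add: rk_equiv_def fo2_equiv_def)

lemma rk_equiv_imp_fo2_equiv:
  assumes "rk_equiv u i1 i2 v j1 j2 n"
    and "i1 \<in> {1..length u}" "i2 \<in> {1..length u}" "j1 \<in> {1..length v}" "j2 \<in> {1..length v}"
  shows "fo2_equiv u i1 i2 v j1 j2 n"
proof -
  have "sat u i1 i2 \<phi> = sat v j1 j2 \<phi>" if "qdepth \<phi> \<le> n" for \<phi>
    using assms that
  proof (induction \<phi> arbitrary: n i1 i2 j1 j2)
    case (Exq z \<phi>)
    then obtain m where "n = Suc m" "qdepth \<phi> \<le> m" by (cases n) auto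
    with Exq show ?case using sat_quantifier_transfer by blast
  next
    case (Allq z \<phi>)
    then obtain m where "n = Suc m" "qdepth \<phi> \<le> m" by (cases n) auto
    with Allq show ?case using sat_quantifier_transfer by blast
  next
    case (Qa a z)
    from Qa.prems(1) show ?case by (rule rk_equiv_sat_atomic) simp
  next
    case (Eqv z z')
    from Eqv.prems(1) show ?case by (rule rk_equiv_sat_atomic) simp
  next
    case (Lessv z z')
    from Lessv.prems(1) show ?case by (rule rk_equiv_sat_atomic) simp
  qed auto
  then show ?thesis by (simp add: fo2_equiv_def)
qed

lemma mem_R_iff: "r \<in> R n w \<longleftrightarrow> length r = n \<and> rk_eval w r \<noteq> None"
  by (cases r) (auto simp: R_def)

lemma mem_Rstar_iff: "r \<in> Rstar n w \<longleftrightarrow> length r \<le> n \<and> rk_eval w r \<noteq> None"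
  by (cases r) (auto simp: Rstar_def R_def)

lemma bp_abs_eq_None_iff: "bp_abs w p = None \<longleftrightarrow> (\<forall>i\<in>{1..length w}. letter w i \<noteq> bpos_letter p)"
  by (cases p) (auto simp: bp_abs_FirstB bp_abs_LastB bp_rel_FirstB bp_rel_LastB)

lemma rk_eval_length_one_word: "length w = 1 \<Longrightarrow> rk_eval w r \<noteq> None \<Longrightarrow> length r = 1"
proof (cases r)
  case (Cons p ps)
  assume w: "length w = 1" and defd: "rk_eval w r \<noteq> None"
  then obtain q where "rk_eval w [p] = Some q" using Cons by (cases "bp_abs w p") auto
  with w have "bp_abs w p = Some 1" using rk_eval_SomeD by fastforce
  moreover have "bp_rel w p' 1 = None" for p'
    using w by (cases p') (simp_all add: bp_rel_FirstB bp_rel_LastB)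
  ultimately show ?thesis using Cons defd by (cases ps) auto
qed simp

text \<open>In a word with at least two positions every position has a neighbour, reached in one step
  by a boundary position for the neighbour's letter.\<close>

lemma rk_cont_extendable:
  "2 \<le> length w \<Longrightarrow> q \<in> {1..length w} \<Longrightarrow> \<exists>s. length s = k \<and> rk_cont w s (Some q) \<noteq> None"
proof (induction k arbitrary: q)
  case 0
  then show ?case by simp
next
  case (Suc k)
  obtain p q' where "bp_rel w p q = Some q'" "q' \<in> {1..length w}"
  proof (cases "q < length w")
    case True
    then have "bp_rel w (FirstB (letter w (Suc q))) q = Some (Suc q)"
      by (auto simp: bp_rel_FirstB Min_opt_eq_Some_iff)
    with True show ?thesis using that by auto
  next
    case False
    then have "bp_rel w (LastB (letter w (q - 1))) q = Some (q - 1)"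
      using Suc.prems by (auto simp: bp_rel_LastB Max_opt_eq_Some_iff)
    with False show ?thesis using that Suc.prems by auto
  qed
  with Suc.IH[OF Suc.prems(1)] show ?case by (metis length_Cons rk_cont.simps(3))
qed

lemma R_eq_imp_defined:
  assumes R: "R n u = R n v" and letter: "letter u i1 = letter v j1"
    and i1: "i1 \<in> {1..length u}" and j1: "j1 \<in> {1..length v}"
    and len: "length r \<le> n" and defd: "rk_eval v r \<noteq> None"
  shows "rk_eval u r \<noteq> None"
proof -
  obtain q where q: "rk_eval v r = Some q" using defd by blast
  have "r \<noteq> []" using defd by auto
  consider "2 \<le> length v" | "length v = 1" using j1 by (simp, linarith)
  then show ?thesis
  proof cases
    case 1
    obtain s where s: "length s = n - length r" "rk_cont v s (Some q) \<noteq> None"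
      using rk_cont_extendable[OF 1] rk_eval_SomeD[OF q] by blast
    with q len \<open>r \<noteq> []\<close> have "r @ s \<in> R n v" by (simp add: mem_R_iff rk_eval_append)
    with R have "r @ s \<in> R n u" by simp
    then have "rk_eval u (r @ s) \<noteq> None" by (simp add: mem_R_iff)
    then show ?thesis using rk_eval_prefix_defined \<open>r \<noteq> []\<close> by blast
  next
    case 2
    from rk_eval_length_one_word[OF 2 defd] obtain p where r: "r = [p]"
      by (auto simp: length_Suc_conv)
    have "letter v j1 = bpos_letter p" using rk_eval_SomeD[OF q] 2 j1 r by auto
    then show ?thesis using r i1 letter by (auto simp: bp_abs_eq_None_iff)
  qed
qed

lemma rk_equiv_if_ranker_conditions:
  assumes i1: "i1 \<in> {1..length u}" and j1: "j1 \<in> {1..length v}"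
    and R: "R n u = R n v"
    and rankers: "\<forall>r\<in>Rstar n u. \<forall>r'\<in>Rstar (n - 1) u.
      ordo (rk_eval u r) (rk_eval u r') = ordo (rk_eval v r) (rk_eval v r')"
    and zero: "fo2_equiv u i1 i2 v j1 j2 0"
    and positions: "\<forall>r\<in>Rstar n u.
      ordo (Some i1) (rk_eval u r) = ordo (Some j1) (rk_eval v r)
      \<and> ordo (Some i2) (rk_eval u r) = ordo (Some j2) (rk_eval v r)"
  shows "rk_equiv u i1 i2 v j1 j2 n"
proof -
  have letter: "letter u i1 = letter v j1" using zero by (simp add: fo2_equiv_0_iff)
  have undef: "rk_eval v r = None" if "rk_eval u r = None" "length r \<le> n" for r
    using R_eq_imp_defined[OF R letter i1 j1 that(2)] that(1) by blast
  have "ordo (Some i1) (rk_eval u r) = ordo (Some j1) (rk_eval v r)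
      \<and> ordo (Some i2) (rk_eval u r) = ordo (Some j2) (rk_eval v r)" if "length r \<le> n" for r
  proof (cases "rk_eval u r = None")
    case False
    with that have "r \<in> Rstar n u" by (simp add: mem_Rstar_iff)
    with positions show ?thesis by blast
  qed (simp add: undef that)
  moreover have "ordo (rk_eval u r) (rk_eval u r') = ordo (rk_eval v r) (rk_eval v r')"
    if "length r \<le> n" "length r' < n" for r r'
  proof (cases "rk_eval u r = None \<or> rk_eval u r' = None")
    case False
    with that have "r \<in> Rstar n u" "r' \<in> Rstar (n - 1) u" by (auto simp: mem_Rstar_iff)
    with rankers show ?thesis by blast
  qed (use undef that in auto)
  ultimately show ?thesis using zero by (simp add: rk_equiv_def)
qed

lemma ranker_conditions_if_rk_equiv:
  assumes "rk_equiv u i1 i2 v j1 j2 n"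
  shows "R n u = R n v
    \<and> (\<forall>r\<in>Rstar n u. \<forall>r'\<in>Rstar (n - 1) u.
          ordo (rk_eval u r) (rk_eval u r') = ordo (rk_eval v r) (rk_eval v r'))
    \<and> fo2_equiv u i1 i2 v j1 j2 0
    \<and> (\<forall>r\<in>Rstar n u.
          ordo (Some i1) (rk_eval u r) = ordo (Some j1) (rk_eval v r)
        \<and> ordo (Some i2) (rk_eval u r) = ordo (Some j2) (rk_eval v r))"
proof -
  have "rk_eval u r \<noteq> None \<longleftrightarrow> rk_eval v r \<noteq> None" if "length r \<le> n" for r
    using assms that by (cases "rk_eval u r"; cases "rk_eval v r") (auto simp: rk_equiv_def)
  then have "R n u = R n v" unfolding set_eq_iff mem_R_iff by (blast intro: order_refl)
  moreover have "ordo (rk_eval u r) (rk_eval u r') = ordo (rk_eval v r) (rk_eval v r')"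
    if "r \<in> Rstar n u" "r' \<in> Rstar (n - 1) u" for r r'
  proof -
    from that have "length r \<le> n" "length r' \<le> n - 1" "0 < length r'"
      by (auto simp: mem_Rstar_iff)
    then have "length r' < n" by linarith
    with assms \<open>length r \<le> n\<close> show ?thesis by (simp add: rk_equiv_def)
  qed
  moreover have "ordo (Some i1) (rk_eval u r) = ordo (Some j1) (rk_eval v r)
      \<and> ordo (Some i2) (rk_eval u r) = ordo (Some j2) (rk_eval v r)" if "r \<in> Rstar n u" for r
    using assms that by (simp add: rk_equiv_def mem_Rstar_iff)
  ultimately show ?thesis using assms by (simp add: rk_equiv_def)
qed

theorem theorem3p9:
  fixes u v :: "('a::finite) list" and i1 i2 j1 j2 n :: nat
  assumes "i1 \<in> {1..length u}" "i2 \<in> {1..length u}"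
    and "j1 \<in> {1..length v}" "j2 \<in> {1..length v}"
  shows "(R n u = R n v
          \<and> (\<forall>r\<in>Rstar n u. \<forall>r'\<in>Rstar (n - 1) u.
                ordo (rk_eval u r) (rk_eval u r') = ordo (rk_eval v r) (rk_eval v r'))
          \<and> fo2_equiv u i1 i2 v j1 j2 0
          \<and> (\<forall>r\<in>Rstar n u.
                ordo (Some i1) (rk_eval u r) = ordo (Some j1) (rk_eval v r)
              \<and> ordo (Some i2) (rk_eval u r) = ordo (Some j2) (rk_eval v r)))
         \<longleftrightarrow> fo2_equiv u i1 i2 v j1 j2 n" (is "?conditions \<longleftrightarrow> _")
proof
  assume ?conditions
  then have "rk_equiv u i1 i2 v j1 j2 n"
    using rk_equiv_if_ranker_conditions[OF assms(1,3)] by blast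
  then show "fo2_equiv u i1 i2 v j1 j2 n"
    using rk_equiv_imp_fo2_equiv assms by blast
next
  assume "fo2_equiv u i1 i2 v j1 j2 n"
  then show ?conditions
    using ranker_conditions_if_rk_equiv fo2_equiv_imp_rk_equiv by blast
qed

end
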